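(* For every $\phi\in\mathcal{L}_{\Box\!\!\rightarrow}$ and every $(\Gamma,\Delta)\in W_c$: (1) $\mathcal{M}_c,(\Gamma,\Delta)\models^+\phi$ iff $\phi\in\Gamma$; (2) $\mathcal{M}_c,(\Gamma,\Delta)\models^-\phi$ iff $\sim\phi\in\Gamma$.
   Context: $\mathcal{L}_{\Box\!\!\rightarrow}$ is built from propositional variables with $\wedge,\vee,\to$, strong negation $\sim$, and a binary would-conditional $\Box\!\!\rightarrow$; $\phi\Diamond\!\!\rightarrow\psi$ abbreviates $\sim(\phi\Box\!\!\rightarrow\sim\psi)$. Abbreviations: $\leftrightarrow$ is mutual $\to$; $\phi\Rightarrow\psi:=(\phi\to\psi)\wedge(\sim\psi\to\sim\phi)$; $\phi\Leftrightarrow\psi:=(\phi\Rightarrow\psi)\wedge(\psi\Rightarrow\phi)$. $\mathbb{N}4\mathbb{CK}$: modus ponens; positive intuitionistic schemes; $\sim\sim\phi\leftrightarrow\phi$, $\sim(\phi\wedge\psi)\leftrightarrow(\sim\phi\vee\sim\psi)$, $\sim(\phi\vee\psi)\leftrightarrow(\sim\phi\wedge\sim\psi)$, $\sim(\phi\to\psi)\leftrightarrow(\phi\wedge\sim\psi)$; (A1) $((\phi\Box\!\!\rightarrow\psi)\wedge(\phi\Box\!\!\rightarrow\chi))\Leftrightarrow(\phi\Box\!\!\rightarrow(\psi\wedge\chi))$; (A2) $(\sim(\phi\Box\!\!\rightarrow\psi)\wedge(\phi\Box\!\!\rightarrow\chi))\to\sim(\phi\Box\!\!\rightarrow(\psi\vee\sim\chi))$;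 (A3) $((\phi\Diamond\!\!\rightarrow\psi)\to(\phi\Box\!\!\rightarrow\chi))\to(\phi\Box\!\!\rightarrow(\psi\to\chi))$; (A4) $\phi\Box\!\!\rightarrow(\psi\to\psi)$; rules: from $\phi\Leftrightarrow\psi$ infer $(\phi\Box\!\!\rightarrow\chi)\Leftrightarrow(\psi\Box\!\!\rightarrow\chi)$; from $\phi\leftrightarrow\psi$ infer $(\chi\Box\!\!\rightarrow\phi)\leftrightarrow(\chi\Box\!\!\rightarrow\psi)$; from $\sim\phi\leftrightarrow\sim\psi$ infer $\sim(\chi\Box\!\!\rightarrow\phi)\leftrightarrow\sim(\chi\Box\!\!\rightarrow\psi)$. $\Gamma\vdash\Delta$ means some nonempty finite disjunction of members of $\Delta$ is derivable from $\Gamma$ and theorems by modus ponens; $(\Gamma,\Delta)$ is maximal iff $\Gamma\not\vdash\Delta$ and $\Gamma\cup\Delta=\mathcal{L}_{\Box\!\!\rightarrow}$. Canonical model $\mathcal{M}_c$: $W_c$ = maximal bi-sets; $(\Gamma_0,\Delta_0)\leq_c(\Gamma_1,\Delta_1)$ iff $\Gamma_0\subseteq\Gamma_1$; $((\Gamma_0,\Delta_0),(X,Y),(\Gamma_1,\Delta_1))\in R_c$ iff for some $\phi$: $X=\{(\Gamma,\Delta)\in W_c\mid\phi\in\Gamma\}$, $Y=\{(\Gamma,\Delta)\in W_c\mid\sim\phi\in\Gamma\}$, $\{\psi\mid\phi\Box\!\!\rightarrow\psi\in\Gamma_0\}\subseteq\Gamma_1$, $\{\sim(\phi\Box\!\!\rightarrow\psi)\mid\sim\psi\in\Gamma_1\}\subseteq\Gamma_0$;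 $V^+_c(p)=\{(\Gamma,\Delta)\mid p\in\Gamma\}$, $V^-_c(p)=\{(\Gamma,\Delta)\mid\sim p\in\Gamma\}$. Verification $\models^+$ / falsification $\models^-$: atoms by $V^\pm$; $\wedge$ verified iff both verified, falsified iff one falsified; $\vee$ dually; $\sim$ swaps $\models^+,\models^-$; $w\models^+\psi\to\chi$ iff for all $v\geq w$, $v\models^+\psi$ implies $v\models^+\chi$; $w\models^-\psi\to\chi$ iff $w\models^+\psi$ and $w\models^-\chi$; $w\models^+\psi\Box\!\!\rightarrow\chi$ iff for all $v\geq w$ and $u$ with $R_{\|\psi\|}(v,u)$, $u\models^+\chi$; $w\models^-\psi\Box\!\!\rightarrow\chi$ iff some $u$ has $R_{\|\psi\|}(w,u)$ and $u\models^-\chi$, where $\|\psi\|=(\{w\mid w\models^+\psi\},\{w\mid w\models^-\psi\})$. *)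

theory Defs
  imports Main
begin

datatype 'a fm =
    Atom 'a
  | Conj "'a fm" "'a fm"
  | Disj "'a fm" "'a fm"
  | Imp "'a fm" "'a fm"
  | Neg "'a fm"            (* strong negation \<sim> *)
  | Box "'a fm" "'a fm"    (* would-conditional *)

definition Dia :: "'a fm \<Rightarrow> 'a fm \<Rightarrow> 'a fm" where
  "Dia a b = Neg (Box a (Neg b))"

definition Iff :: "'a fm \<Rightarrow> 'a fm \<Rightarrow> 'a fm" where
  "Iff a b = Conj (Imp a b) (Imp b a)"

definition SImp :: "'a fm \<Rightarrow> 'a fm \<Rightarrow> 'a fm" where
  "SImp a b = Conj (Imp a b) (Imp (Neg b) (Neg a))"

definition SIff :: "'a fm \<Rightarrow> 'a fm \<Rightarrow> 'a fm" where
  "SIff a b = Conj (SImp a b) (SImp b a)"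

inductive axiom :: "'a fm \<Rightarrow> bool" where
  ax_K: "axiom (Imp p (Imp q p))"
| ax_S: "axiom (Imp (Imp p (Imp q r)) (Imp (Imp p q) (Imp p r)))"
| ax_C1: "axiom (Imp (Conj p q) p)"
| ax_C2: "axiom (Imp (Conj p q) q)"
| ax_C3: "axiom (Imp p (Imp q (Conj p q)))"
| ax_D1: "axiom (Imp p (Disj p q))"
| ax_D2: "axiom (Imp q (Disj p q))"
| ax_D3: "axiom (Imp (Imp p r) (Imp (Imp q r) (Imp (Disj p q) r)))"
| ax_NN: "axiom (Iff (Neg (Neg p)) p)"
| ax_NC: "axiom (Iff (Neg (Conj p q)) (Disj (Neg p) (Neg q)))"
| ax_ND: "axiom (Iff (Neg (Disj p q)) (Conj (Neg p) (Neg q)))"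
| ax_NI: "axiom (Iff (Neg (Imp p q)) (Conj p (Neg q)))"
| ax_A1: "axiom (SIff (Conj (Box p q) (Box p r)) (Box p (Conj q r)))"
| ax_A2: "axiom (Imp (Conj (Neg (Box p q)) (Box p r)) (Neg (Box p (Disj q (Neg r)))))"
| ax_A3: "axiom (Imp (Imp (Dia p q) (Box p r)) (Box p (Imp q r)))"
| ax_A4: "axiom (Box p (Imp q q))"

inductive theorem_of :: "'a fm \<Rightarrow> bool" where
  thm_ax: "axiom p \<Longrightarrow> theorem_of p"
| thm_mp: "theorem_of p \<Longrightarrow> theorem_of (Imp p q) \<Longrightarrow> theorem_of q"
| thm_RA: "theorem_of (SIff p q) \<Longrightarrow> theorem_of (SIff (Box p r) (Box q r))"
| thm_RC: "theorem_of (Iff p q) \<Longrightarrow> theorem_of (Iff (Box r p) (Box r q))"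
| thm_RN: "theorem_of (Iff (Neg p) (Neg q)) \<Longrightarrow> theorem_of (Iff (Neg (Box r p)) (Neg (Box r q)))"

inductive derives :: "'a fm set \<Rightarrow> 'a fm \<Rightarrow> bool" where
  der_hyp: "p \<in> G \<Longrightarrow> derives G p"
| der_thm: "theorem_of p \<Longrightarrow> derives G p"
| der_mp: "derives G p \<Longrightarrow> derives G (Imp p q) \<Longrightarrow> derives G q"

fun disjs :: "'a fm list \<Rightarrow> 'a fm" where
  "disjs [] = Atom undefined"   (* never used: disjunctions are nonempty *)
| "disjs [p] = p"
| "disjs (p # ps) = Disj p (disjs ps)"

definition bider :: "'a fm set \<Rightarrow> 'a fm set \<Rightarrow> bool" where
  "bider G D \<longleftrightarrow> (\<exists>ds. ds \<noteq> [] \<and> set ds \<subseteq> D \<and> derives G (disjs ds))"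

definition maximal :: "'a fm set \<times> 'a fm set \<Rightarrow> bool" where
  "maximal GD \<longleftrightarrow> \<not> bider (fst GD) (snd GD) \<and> fst GD \<union> snd GD = UNIV"

record ('w, 'a) model =
  W :: "'w set"
  le :: "'w \<Rightarrow> 'w \<Rightarrow> bool"
  R :: "'w \<Rightarrow> 'w set \<times> 'w set \<Rightarrow> 'w \<Rightarrow> bool"
  Vp :: "'a \<Rightarrow> 'w set"
  Vn :: "'a \<Rightarrow> 'w set"

text \<open>\<open>sat M \<phi> True w\<close>: verification; \<open>sat M \<phi> False w\<close>: falsification.\<close>
primrec sat :: "('w, 'a) model \<Rightarrow> 'a fm \<Rightarrow> bool \<Rightarrow> 'w \<Rightarrow> bool" where
  "sat M (Atom p) pol w = (if pol then w \<in> Vp M p else w \<in> Vn M p)"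
| "sat M (Conj a b) pol w =
     (if pol then sat M a True w \<and> sat M b True w else sat M a False w \<or> sat M b False w)"
| "sat M (Disj a b) pol w =
     (if pol then sat M a True w \<or> sat M b True w else sat M a False w \<and> sat M b False w)"
| "sat M (Neg a) pol w = sat M a (\<not> pol) w"
| "sat M (Imp a b) pol w =
     (if pol then (\<forall>v\<in>W M. le M w v \<longrightarrow> sat M a True v \<longrightarrow> sat M b True v)
      else sat M a True w \<and> sat M b False w)"
| "sat M (Box a b) pol w =
     (if pol then (\<forall>v\<in>W M. le M w v \<longrightarrow>
          (\<forall>u\<in>W M. R M v ({x\<in>W M. sat M a True x}, {x\<in>W M. sat M a False x}) u \<longrightarrow> sat M b True u))
      else (\<exists>u\<in>W M. R M w ({x\<in>W M. sat M a True x}, {x\<in>W M. sat M a False x}) u \<and> sat M b False u))"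

type_synonym 'a bset = "'a fm set \<times> 'a fm set"

definition Wc :: "'a bset set" where
  "Wc = {GD. maximal GD}"

definition lec :: "'a bset \<Rightarrow> 'a bset \<Rightarrow> bool" where
  "lec w v \<longleftrightarrow> fst w \<subseteq> fst v"

definition Rc :: "'a bset \<Rightarrow> 'a bset set \<times> 'a bset set \<Rightarrow> 'a bset \<Rightarrow> bool" where
  "Rc w XY v \<longleftrightarrow> w \<in> Wc \<and> v \<in> Wc \<and>
     (\<exists>\<phi>. fst XY = {GD \<in> Wc. \<phi> \<in> fst GD} \<and> snd XY = {GD \<in> Wc. Neg \<phi> \<in> fst GD}
        \<and> {\<psi>. Box \<phi> \<psi> \<in> fst w} \<subseteq> fst v
        \<and> {Neg (Box \<phi> \<psi>) | \<psi>. Neg \<psi> \<in> fst v} \<subseteq> fst w)"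

definition Mc :: "('a bset, 'a) model" where
  "Mc = \<lparr> W = Wc, le = lec, R = Rc,
          Vp = (\<lambda>p. {GD \<in> Wc. Atom p \<in> fst GD}),
          Vn = (\<lambda>p. {GD \<in> Wc. Neg (Atom p) \<in> fst GD}) \<rparr>"

end

theory Submission
  imports Defs
begin

(*
  A maximal bi-set (G, D) has D = -G, and G is a prime theory: it is
  closed under derivability and contains a disjunct of each of its disjunctions. So the
  propositional and strong negation cases follow from the N4 axioms, and the implication case
  from the deduction theorem and the Lindenbaum lemma (Zorn's lemma plus compactness).

  For the conditional, the canonical relation attached to the truth set of a does not depend on
  the formula chosen to name that set: formulas with the same truth sets are strongly
  equivalent, so rule RA applies. Witnesses come from the Lindenbaum lemma. If Box a b is not
  in G, extend {c. Box a c in G} to u avoiding b, and then G together with {Dia a c | c in u}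
  to v avoiding {Box a c | c not in u}; this is consistent by A3 and the primeness of u. If
  Neg (Box a b) is in G, extend {c. Box a c in G} together with Neg b to u avoiding
  {Neg c | Neg (Box a c) not in G}; this is consistent by A1 and A2.
*)

section \<open>Derivability\<close>

lemma derives_mono: "derives G p \<Longrightarrow> G \<subseteq> H \<Longrightarrow> derives H p"
  by (induction rule: derives.induct) (auto intro: derives.intros)

lemma derives_axiom: "axiom p \<Longrightarrow> derives G p"
  by (simp add: der_thm thm_ax)

lemma derives_Imp_refl: "derives G (Imp p p)"
proof -
  have "derives G (Imp (Imp p (Imp (Imp p p) p)) (Imp (Imp p (Imp p p)) (Imp p p)))"
    by (rule derives_axiom, rule ax_S)
  moreover have "derives G (Imp p (Imp (Imp p p) p))" and "derives G (Imp p (Imp p p))"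
    by (rule derives_axiom, rule ax_K)+
  ultimately show ?thesis
    using der_mp by blast
qed

lemma derives_Imp_iff: "derives G (Imp p q) \<longleftrightarrow> derives (insert p G) q"
proof
  assume "derives G (Imp p q)"
  then show "derives (insert p G) q"
    by (meson der_hyp der_mp derives_mono insertI1 subset_insertI)
next
  assume "derives (insert p G) q"
  then show "derives G (Imp p q)"
  proof (induction "insert p G" q rule: derives.induct)
    case (der_hyp q)
    show ?case
    proof (cases "q = p")
      case False
      with der_hyp have "derives G q"
        by (simp add: derives.der_hyp)
      then show ?thesis
        using derives.der_mp derives_axiom[OF ax_K] by blast
    qed (simp add: derives_Imp_refl)
  next
    case (der_thm q)
    then show ?case
      using derives.der_mp derives.der_thm derives_axiom[OF ax_K] by blast
  next
    case (der_mp q r)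
    then show ?case
      using derives.der_mp derives_axiom[OF ax_S] by blast
  qed
qed

lemma theorem_of_iff_derives: "theorem_of p \<longleftrightarrow> derives {} p"
proof
  show "derives {} p \<Longrightarrow> theorem_of p"
    by (induction "{} :: 'a fm set" p rule: derives.induct) (auto intro: theorem_of.intros)
qed (rule der_thm)

lemma theorem_of_ImpI: "derives {p} q \<Longrightarrow> theorem_of (Imp p q)"
  by (simp add: theorem_of_iff_derives derives_Imp_iff)

lemma derives_theorem_mp: "theorem_of (Imp p q) \<Longrightarrow> derives G p \<Longrightarrow> derives G q"
  using der_mp der_thm by blast

lemma derives_ConjI: "derives G p \<Longrightarrow> derives G q \<Longrightarrow> derives G (Conj p q)"
  by (meson ax_C3 der_mp derives_axiom)

lemma derives_ConjE1: "derives G (Conj p q) \<Longrightarrow> derives G p"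
  by (meson ax_C1 der_mp derives_axiom)

lemma derives_ConjE2: "derives G (Conj p q) \<Longrightarrow> derives G q"
  by (meson ax_C2 der_mp derives_axiom)

lemma derives_DisjI1: "derives G p \<Longrightarrow> derives G (Disj p q)"
  by (meson ax_D1 der_mp derives_axiom)

lemma derives_DisjI2: "derives G q \<Longrightarrow> derives G (Disj p q)"
  by (meson ax_D2 der_mp derives_axiom)

lemma derives_DisjE:
  "derives G (Disj p q) \<Longrightarrow> derives (insert p G) r \<Longrightarrow> derives (insert q G) r \<Longrightarrow> derives G r"
  by (meson ax_D3 der_mp derives_Imp_iff derives_axiom)

lemma derives_insert_hyp: "derives (insert p G) p"
  by (simp add: der_hyp)

lemma derives_Iff: "theorem_of (Iff p q) \<Longrightarrow> derives G p \<longleftrightarrow> derives G q"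
  unfolding Iff_def by (meson der_thm derives_ConjE1 derives_ConjE2 der_mp)

lemma derives_SIff:
  assumes "theorem_of (SIff p q)"
  shows "derives G p \<longleftrightarrow> derives G q" and "derives G (Neg p) \<longleftrightarrow> derives G (Neg q)"
  using der_thm[OF assms, of G] unfolding SIff_def SImp_def
  by (meson der_mp derives_ConjE1 derives_ConjE2)+

lemma derives_Neg_Neg_iff: "derives G (Neg (Neg p)) \<longleftrightarrow> derives G p"
  by (rule derives_Iff[OF thm_ax[OF ax_NN]])

lemma derives_Neg_Conj_iff: "derives G (Neg (Conj p q)) \<longleftrightarrow> derives G (Disj (Neg p) (Neg q))"
  by (rule derives_Iff[OF thm_ax[OF ax_NC]])

lemma derives_Neg_Disj_iff: "derives G (Neg (Disj p q)) \<longleftrightarrow> derives G (Conj (Neg p) (Neg q))"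
  by (rule derives_Iff[OF thm_ax[OF ax_ND]])

lemma derives_Neg_Imp_iff: "derives G (Neg (Imp p q)) \<longleftrightarrow> derives G (Conj p (Neg q))"
  by (rule derives_Iff[OF thm_ax[OF ax_NI]])

lemma theorem_of_ConjI: "theorem_of p \<Longrightarrow> theorem_of q \<Longrightarrow> theorem_of (Conj p q)"
  by (simp add: theorem_of_iff_derives derives_ConjI)

lemma theorem_of_IffI: "theorem_of (Imp p q) \<Longrightarrow> theorem_of (Imp q p) \<Longrightarrow> theorem_of (Iff p q)"
  unfolding Iff_def by (rule theorem_of_ConjI)

lemma theorem_of_SIffI:
  "theorem_of (Imp p q) \<Longrightarrow> theorem_of (Imp q p) \<Longrightarrow>
   theorem_of (Imp (Neg p) (Neg q)) \<Longrightarrow> theorem_of (Imp (Neg q) (Neg p)) \<Longrightarrow> theorem_of (SIff p q)"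
  unfolding SIff_def SImp_def by (intro theorem_of_ConjI)

lemma theorem_of_Imp_trans:
  "theorem_of (Imp p q) \<Longrightarrow> theorem_of (Imp q r) \<Longrightarrow> theorem_of (Imp p r)"
  by (meson derives_insert_hyp derives_theorem_mp theorem_of_ImpI)

lemma theorem_Neg_Disj_Neg_Imp: "theorem_of (Imp (Neg (Disj p (Neg (Imp (Neg p) q)))) q)"
proof (rule theorem_of_ImpI)
  let ?H = "{Neg (Disj p (Neg (Imp (Neg p) q)))}"
  have "derives ?H (Neg p)" and "derives ?H (Imp (Neg p) q)"
    using derives_Neg_Disj_iff derives_Neg_Neg_iff derives_ConjE1 derives_ConjE2 derives_insert_hyp
    by blast+
  then show "derives ?H q"
    by (rule der_mp)
qed

lemma derives_disjs_member: "d \<in> set ds \<Longrightarrow> derives G (Imp d (disjs ds))"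
proof (induction ds rule: disjs.induct)
  case (3 p q qs)
  then show ?case
    by (auto simp: derives_Imp_iff intro: derives_DisjI1 derives_DisjI2 derives_insert_hyp)
qed (simp_all add: derives_Imp_refl)

lemma derives_disjs_elim:
  "ds \<noteq> [] \<Longrightarrow> \<forall>d\<in>set ds. derives G (Imp d r) \<Longrightarrow> derives G (Imp (disjs ds) r)"
proof (induction ds rule: disjs.induct)
  case (3 p q qs)
  then show ?case
    using der_mp derives_axiom[OF ax_D3] by simp blast
qed simp_all

lemma derives_disjs_subset: "ds \<noteq> [] \<Longrightarrow> set ds \<subseteq> set es \<Longrightarrow> derives G (Imp (disjs ds) (disjs es))"
  by (auto intro: derives_disjs_elim derives_disjs_member)

lemma bider_singleton_iff: "bider G {b} \<longleftrightarrow> derives G b"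
proof
  assume "bider G {b}"
  then obtain ds where "ds \<noteq> []" "set ds \<subseteq> {b}" "derives G (disjs ds)"
    unfolding bider_def by blast
  then show "derives G b"
    using derives_disjs_subset[of ds "[b]"] der_mp by fastforce
next
  show "derives G b \<Longrightarrow> bider G {b}"
    unfolding bider_def by (intro exI[of _ "[b]"]) simp
qed

fun imps :: "'a fm list \<Rightarrow> 'a fm \<Rightarrow> 'a fm" where
  "imps [] c = c"
| "imps (q # qs) c = Imp q (imps qs c)"

lemma derives_imps_iff: "derives G (imps qs t) \<longleftrightarrow> derives (G \<union> set qs) t"
  by (induction qs arbitrary: G) (simp_all add: derives_Imp_iff)

lemma derives_compact: "derives (G \<union> S) t \<Longrightarrow> \<exists>qs. set qs \<subseteq> S \<and> derives G (imps qs t)"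
proof (induction "G \<union> S" t rule: derives.induct)
  case (der_hyp p)
  then show ?case
  proof
    assume "p \<in> G"
    then show ?thesis
      by (intro exI[of _ "[]"]) (simp add: derives.der_hyp)
  next
    assume "p \<in> S"
    then show ?thesis
      by (intro exI[of _ "[p]"]) (simp add: derives_Imp_refl)
  qed
next
  case (der_thm p)
  then show ?case
    by (intro exI[of _ "[]"]) (simp add: derives.der_thm)
next
  case (der_mp p q)
  then obtain qs1 qs2 where "set qs1 \<subseteq> S" "derives (G \<union> set qs1) p"
    and "set qs2 \<subseteq> S" "derives (G \<union> set qs2) (Imp p q)"
    by (auto simp: derives_imps_iff)
  then have "derives (G \<union> set (qs1 @ qs2)) p" and "derives (G \<union> set (qs1 @ qs2)) (Imp p q)"
    by (auto elim!: derives_mono)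
  then have "derives (G \<union> set (qs1 @ qs2)) q"
    by (rule derives.der_mp)
  then show ?case
    using \<open>set qs1 \<subseteq> S\<close> \<open>set qs2 \<subseteq> S\<close> by (intro exI[of _ "qs1 @ qs2"]) (simp add: derives_imps_iff)
qed

section \<open>Maximal bi-sets and the Lindenbaum lemma\<close>

lemma bider_mono: "bider G D \<Longrightarrow> D \<subseteq> D' \<Longrightarrow> bider G D'"
  unfolding bider_def by blast

lemma bider_if_common_member: "p \<in> G \<Longrightarrow> p \<in> D \<Longrightarrow> bider G D"
  unfolding bider_def by (intro exI[of _ "[p]"]) (simp add: der_hyp)

lemma Wc_snd: "w \<in> Wc \<Longrightarrow> snd w = - fst w"
proof -
  assume "w \<in> Wc"
  then have "\<not> bider (fst w) (snd w)" and "fst w \<union> snd w = UNIV"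
    by (simp_all add: Wc_def maximal_def)
  then show ?thesis
    using bider_if_common_member by blast
qed

lemma Wc_not_bider: "w \<in> Wc \<Longrightarrow> \<not> bider (fst w) (- fst w)"
  using Wc_snd[of w] unfolding Wc_def maximal_def by force

lemma Wc_derives_iff:
  assumes "w \<in> Wc"
  shows "derives (fst w) p \<longleftrightarrow> p \<in> fst w"
proof
  assume "derives (fst w) p"
  then have "bider (fst w) {p}"
    by (simp add: bider_singleton_iff)
  then show "p \<in> fst w"
    using Wc_not_bider[OF assms] bider_mono by blast
qed (rule der_hyp)

lemma Wc_disjs: "w \<in> Wc \<Longrightarrow> ds \<noteq> [] \<Longrightarrow> disjs ds \<in> fst w \<Longrightarrow> \<exists>d\<in>set ds. d \<in> fst w"
  using Wc_not_bider[of w] der_hyp[of "disjs ds" "fst w"] unfolding bider_def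
  by blast

lemma Wc_Disj_iff: "w \<in> Wc \<Longrightarrow> Disj p q \<in> fst w \<longleftrightarrow> p \<in> fst w \<or> q \<in> fst w"
  using Wc_disjs[of w "[p, q]"] Wc_derives_iff[of w] der_hyp[of _ "fst w"]
  by (auto intro: derives_DisjI1 derives_DisjI2)

lemma Wc_Conj_iff: "w \<in> Wc \<Longrightarrow> Conj a b \<in> fst w \<longleftrightarrow> a \<in> fst w \<and> b \<in> fst w"
  by (meson Wc_derives_iff der_hyp derives_ConjE1 derives_ConjE2 derives_ConjI)

lemma Wc_Neg_Neg_iff: "w \<in> Wc \<Longrightarrow> Neg (Neg a) \<in> fst w \<longleftrightarrow> a \<in> fst w"
  by (metis Wc_derives_iff derives_Neg_Neg_iff)

lemma Wc_Neg_Conj_iff: "w \<in> Wc \<Longrightarrow> Neg (Conj a b) \<in> fst w \<longleftrightarrow> Neg a \<in> fst w \<or> Neg b \<in> fst w"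
  by (metis Wc_Disj_iff Wc_derives_iff derives_Neg_Conj_iff)

lemma Wc_Neg_Disj_iff: "w \<in> Wc \<Longrightarrow> Neg (Disj a b) \<in> fst w \<longleftrightarrow> Neg a \<in> fst w \<and> Neg b \<in> fst w"
  by (metis Wc_Conj_iff Wc_derives_iff derives_Neg_Disj_iff)

lemma Wc_Neg_Imp_iff: "w \<in> Wc \<Longrightarrow> Neg (Imp a b) \<in> fst w \<longleftrightarrow> a \<in> fst w \<and> Neg b \<in> fst w"
  by (metis Wc_Conj_iff Wc_derives_iff derives_Neg_Imp_iff)

lemma not_bider_Union_chain:
  assumes "subset.chain A C" and "C \<noteq> {}" and "\<forall>G\<in>C. \<not> bider G D"
  shows "\<not> bider (\<Union>C) D"
proof
  assume "bider (\<Union>C) D"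
  then obtain ds where ds: "ds \<noteq> []" "set ds \<subseteq> D" "derives (\<Union>C) (disjs ds)"
    unfolding bider_def by blast
  from ds(3) have "derives ({} \<union> \<Union>C) (disjs ds)"
    by simp
  then obtain qs where "set qs \<subseteq> \<Union>C" and "derives {} (imps qs (disjs ds))"
    using derives_compact by blast
  then have "derives (set qs) (disjs ds)"
    by (simp add: derives_imps_iff)
  obtain G where "G \<in> C" and "set qs \<subseteq> G"
    using finite_subset_Union_chain[OF finite_set \<open>set qs \<subseteq> \<Union>C\<close> assms(2,1)] by blast
  have "derives G (disjs ds)"
    using derives_mono[OF \<open>derives (set qs) (disjs ds)\<close> \<open>set qs \<subseteq> G\<close>] .
  then have "bider G D"
    unfolding bider_def using ds(1,2) by blast
  with \<open>G \<in> C\<close> assms(3) show False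
    by blast
qed

lemma not_bider_compl_if_maximal:
  assumes nb: "\<not> bider M D" and max: "\<And>d. d \<notin> M \<Longrightarrow> bider (insert d M) D"
  shows "\<not> bider M (- M)"
proof
  assume "bider M (- M)"
  then obtain ds where ds: "ds \<noteq> []" "set ds \<subseteq> - M" "derives M (disjs ds)"
    unfolding bider_def by blast
  have "\<forall>d\<in>set ds. \<exists>es. es \<noteq> [] \<and> set es \<subseteq> D \<and> derives (insert d M) (disjs es)"
    using ds(2) max unfolding bider_def by blast
  then obtain es where es: "\<And>d. d \<in> set ds \<Longrightarrow>
      es d \<noteq> [] \<and> set (es d) \<subseteq> D \<and> derives (insert d M) (disjs (es d))"
    by metis
  define E where "E = concat (map es ds)"
  have "derives M (Imp d (disjs E))" if "d \<in> set ds" for d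
  proof -
    have "derives (insert d M) (Imp (disjs (es d)) (disjs E))"
      using that es[OF that] by (intro derives_disjs_subset) (auto simp: E_def)
    then show ?thesis
      using es[OF that] der_mp derives_Imp_iff by blast
  qed
  then have "derives M (disjs E)"
    using ds(1,3) der_mp derives_disjs_elim by blast
  moreover have "E \<noteq> []" and "set E \<subseteq> D"
    using ds(1) es by (auto simp: E_def neq_Nil_conv)
  ultimately show False
    using nb unfolding bider_def by blast
qed

lemma lindenbaum:
  assumes "\<not> bider G D"
  shows "\<exists>w\<in>Wc. G \<subseteq> fst w \<and> D \<inter> fst w = {}"
proof -
  define F where "F = {H. G \<subseteq> H \<and> \<not> bider H D}"
  have "\<Union>C \<in> F" if "C \<noteq> {}" and "subset.chain F C" for C
    using that not_bider_Union_chain[OF that(2,1)]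
    unfolding F_def subset.chain_def by blast
  then obtain M where "M \<in> F" and M_max: "\<forall>H\<in>F. M \<subseteq> H \<longrightarrow> H = M"
    using subset_Zorn_nonempty[of F] assms unfolding F_def by blast
  have "bider (insert d M) D" if "d \<notin> M" for d
    using M_max \<open>M \<in> F\<close> that unfolding F_def by blast
  then have "\<not> bider M (- M)"
    using \<open>M \<in> F\<close> not_bider_compl_if_maximal[of M D] unfolding F_def by blast
  then have "(M, - M) \<in> Wc"
    by (simp add: Wc_def maximal_def)
  moreover have "D \<inter> M = {}"
    using \<open>M \<in> F\<close> bider_if_common_member unfolding F_def by blast
  ultimately show ?thesis
    using \<open>M \<in> F\<close> unfolding F_def by force
qed

lemma lindenbaum_singleton: "\<not> derives G b \<Longrightarrow> \<exists>w\<in>Wc. G \<subseteq> fst w \<and> b \<notin> fst w"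
  using lindenbaum[of G "{b}"] by (auto simp: bider_singleton_iff)

lemma Wc_Imp_iff:
  assumes w: "w \<in> Wc"
  shows "Imp a b \<in> fst w \<longleftrightarrow> (\<forall>v\<in>Wc. lec w v \<longrightarrow> a \<in> fst v \<longrightarrow> b \<in> fst v)"
proof
  assume "Imp a b \<in> fst w"
  then show "\<forall>v\<in>Wc. lec w v \<longrightarrow> a \<in> fst v \<longrightarrow> b \<in> fst v"
    unfolding lec_def using Wc_derives_iff der_hyp der_mp by blast
next
  assume "\<forall>v\<in>Wc. lec w v \<longrightarrow> a \<in> fst v \<longrightarrow> b \<in> fst v"
  moreover have "\<exists>v\<in>Wc. lec w v \<and> a \<in> fst v \<and> b \<notin> fst v" if "Imp a b \<notin> fst w"
  proof -
    have "\<not> derives (insert a (fst w)) b"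
      using that Wc_derives_iff[OF w] derives_Imp_iff by blast
    then show ?thesis
      unfolding lec_def using lindenbaum_singleton by blast
  qed
  ultimately show "Imp a b \<in> fst w"
    by blast
qed

section \<open>Reasoning with the conditional\<close>

lemma theorem_Box_mono:
  assumes "theorem_of (Imp p q)"
  shows "theorem_of (Imp (Box r p) (Box r q))"
proof -
  have "theorem_of (Imp p (Conj p q))"
    by (rule theorem_of_ImpI, rule derives_ConjI)
      (rule derives_insert_hyp, rule derives_theorem_mp[OF assms derives_insert_hyp])
  moreover have "theorem_of (Imp (Conj p q) p)"
    by (rule theorem_of_ImpI, rule derives_ConjE1[OF derives_insert_hyp])
  ultimately have Box_iff: "theorem_of (Iff (Box r p) (Box r (Conj p q)))"
    by (intro thm_RC theorem_of_IffI)
  show ?thesis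
  proof (rule theorem_of_ImpI)
    have "derives {Box r p} (Box r (Conj p q))"
      using derives_Iff[OF Box_iff] derives_insert_hyp by blast
    then have "derives {Box r p} (Conj (Box r p) (Box r q))"
      using derives_SIff(1)[OF thm_ax[OF ax_A1]] by blast
    then show "derives {Box r p} (Box r q)"
      by (rule derives_ConjE2)
  qed
qed

lemma derives_Box_K:
  assumes "derives G (Box r (Imp p q))" and "derives G (Box r p)"
  shows "derives G (Box r q)"
proof -
  have "theorem_of (Imp (Conj (Imp p q) p) q)"
    by (rule theorem_of_ImpI, rule der_mp[OF derives_ConjE2 derives_ConjE1])
      (rule derives_insert_hyp)+
  moreover have "derives G (Box r (Conj (Imp p q) p))"
    using derives_SIff(1)[OF thm_ax[OF ax_A1]] derives_ConjI[OF assms] by blast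
  ultimately show ?thesis
    using derives_theorem_mp theorem_Box_mono by blast
qed

lemma derives_Box_theorem: "theorem_of p \<Longrightarrow> derives G (Box r p)"
  using derives_theorem_mp[OF theorem_Box_mono derives_axiom[OF ax_A4]]
    theorem_of_ImpI der_thm by blast

lemma derives_Box_closure:
  "derives B c \<Longrightarrow> \<forall>\<psi>\<in>B. derives G (Box a \<psi>) \<Longrightarrow> derives G (Box a c)"
  by (induction rule: derives.induct) (auto intro: derives_Box_theorem derives_Box_K)

lemma theorem_Neg_Box_mono:
  assumes "theorem_of (Imp (Neg q) (Neg p))"
  shows "theorem_of (Imp (Neg (Box r q)) (Neg (Box r p)))"
proof -
  have "theorem_of (Imp (Neg p) (Neg (Conj p q)))"
    by (rule theorem_of_ImpI) (simp add: derives_Neg_Conj_iff derives_DisjI1 derives_insert_hyp)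
  moreover have "theorem_of (Imp (Neg (Conj p q)) (Neg p))"
  proof (rule theorem_of_ImpI)
    have "derives {Neg (Conj p q)} (Disj (Neg p) (Neg q))"
      using derives_Neg_Conj_iff derives_insert_hyp by blast
    then show "derives {Neg (Conj p q)} (Neg p)"
      by (rule derives_DisjE) (auto intro: derives_insert_hyp derives_theorem_mp[OF assms])
  qed
  ultimately have Neg_Box_iff: "theorem_of (Iff (Neg (Box r p)) (Neg (Box r (Conj p q))))"
    by (intro thm_RN theorem_of_IffI)
  show ?thesis
  proof (rule theorem_of_ImpI)
    have "derives {Neg (Box r q)} (Neg (Conj (Box r p) (Box r q)))"
      by (simp add: derives_Neg_Conj_iff derives_DisjI2 derives_insert_hyp)
    then have "derives {Neg (Box r q)} (Neg (Box r (Conj p q)))"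
      using derives_SIff(2)[OF thm_ax[OF ax_A1]] by blast
    then show "derives {Neg (Box r q)} (Neg (Box r p))"
      using derives_Iff[OF Neg_Box_iff] by blast
  qed
qed

lemma derives_Neg_Box_if_Dia_Neg: "derives G (Dia a (Neg \<psi>)) \<Longrightarrow> derives G (Neg (Box a \<psi>))"
  unfolding Dia_def using derives_Iff[OF thm_RN[OF thm_ax[OF ax_NN]]] by blast

lemma derives_Box_imps_if_Dia:
  "derives G (imps (map (Dia a) qs) (Box a c)) \<Longrightarrow> derives G (Box a (imps qs c))"
proof (induction qs arbitrary: G)
  case (Cons q qs)
  then have "derives G (Imp (Dia a q) (Box a (imps qs c)))"
    by (simp add: derives_Imp_iff)
  then show ?case
    using der_mp derives_axiom[OF ax_A3] by simp blast
qed simp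

lemma theorem_disjs_Box:
  "\<chi>s \<noteq> [] \<Longrightarrow> theorem_of (Imp (disjs (map (Box a) \<chi>s)) (Box a (disjs \<chi>s)))"
proof (induction \<chi>s rule: induct_list012)
  case (3 \<chi> \<chi>' \<chi>s)
  let ?B = "disjs (map (Box a) (\<chi>' # \<chi>s))" and ?D = "disjs (\<chi>' # \<chi>s)"
  have IH: "theorem_of (Imp ?B (Box a ?D))"
    using "3.IH"(2) by simp
  have mono1: "theorem_of (Imp (Box a \<chi>) (Box a (Disj \<chi> ?D)))"
    and mono2: "theorem_of (Imp (Box a ?D) (Box a (Disj \<chi> ?D)))"
    by (rule theorem_Box_mono, rule thm_ax, rule ax_D1 ax_D2)+
  have "derives {Disj (Box a \<chi>) ?B} (Box a (Disj \<chi> ?D))"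
  proof (rule derives_DisjE[OF derives_insert_hyp])
    show "derives (insert (Box a \<chi>) {Disj (Box a \<chi>) ?B}) (Box a (Disj \<chi> ?D))"
      by (rule derives_theorem_mp[OF mono1 derives_insert_hyp])
    show "derives (insert ?B {Disj (Box a \<chi>) ?B}) (Box a (Disj \<chi> ?D))"
      by (rule derives_theorem_mp[OF mono2 derives_theorem_mp[OF IH derives_insert_hyp]])
  qed
  then show ?case
    by (simp add: theorem_of_ImpI)
qed (simp_all add: theorem_of_ImpI derives_insert_hyp)

fun conjs :: "'a fm list \<Rightarrow> 'a fm" where
  "conjs [p] = p"
| "conjs (p # ps) = Conj p (conjs ps)"

lemma theorem_disjs_Neg_conjs:
  "\<psi>s \<noteq> [] \<Longrightarrow> theorem_of (Imp (disjs (map Neg \<psi>s)) (Neg (conjs \<psi>s)))"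
proof (induction \<psi>s rule: induct_list012)
  case (3 \<psi> \<psi>' \<psi>s)
  let ?D = "disjs (map Neg (\<psi>' # \<psi>s))" and ?C = "conjs (\<psi>' # \<psi>s)"
  have IH: "theorem_of (Imp ?D (Neg ?C))"
    using "3.IH"(2) by simp
  have "derives {Disj (Neg \<psi>) ?D} (Disj (Neg \<psi>) (Neg ?C))"
  proof (rule derives_DisjE[OF derives_insert_hyp])
    show "derives (insert (Neg \<psi>) {Disj (Neg \<psi>) ?D}) (Disj (Neg \<psi>) (Neg ?C))"
      by (rule derives_DisjI1, rule derives_insert_hyp)
    show "derives (insert ?D {Disj (Neg \<psi>) ?D}) (Disj (Neg \<psi>) (Neg ?C))"
      by (rule derives_DisjI2, rule derives_theorem_mp[OF IH derives_insert_hyp])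
  qed
  then show ?case
    by (simp add: theorem_of_ImpI derives_Neg_Conj_iff)
qed (simp_all add: theorem_of_ImpI derives_insert_hyp)

lemma theorem_Neg_Box_conjs:
  "\<psi>s \<noteq> [] \<Longrightarrow> theorem_of (Imp (Neg (Box a (conjs \<psi>s))) (disjs (map (\<lambda>\<psi>. Neg (Box a \<psi>)) \<psi>s)))"
proof (induction \<psi>s rule: induct_list012)
  case (3 \<psi> \<psi>' \<psi>s)
  let ?C = "conjs (\<psi>' # \<psi>s)" and ?D = "disjs (map (\<lambda>\<psi>. Neg (Box a \<psi>)) (\<psi>' # \<psi>s))"
  have IH: "theorem_of (Imp (Neg (Box a ?C)) ?D)"
    using "3.IH"(2) by simp
  have "derives {Neg (Box a (Conj \<psi> ?C))} (Disj (Neg (Box a \<psi>)) (Neg (Box a ?C)))"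
    using derives_SIff(2)[OF thm_ax[OF ax_A1]] derives_Neg_Conj_iff derives_insert_hyp by blast
  then have "derives {Neg (Box a (Conj \<psi> ?C))} (Disj (Neg (Box a \<psi>)) ?D)"
  proof (rule derives_DisjE)
    show "derives (insert (Neg (Box a \<psi>)) {Neg (Box a (Conj \<psi> ?C))}) (Disj (Neg (Box a \<psi>)) ?D)"
      by (rule derives_DisjI1, rule derives_insert_hyp)
    show "derives (insert (Neg (Box a ?C)) {Neg (Box a (Conj \<psi> ?C))}) (Disj (Neg (Box a \<psi>)) ?D)"
      by (rule derives_DisjI2, rule derives_theorem_mp[OF IH derives_insert_hyp])
  qed
  then show ?case
    by (simp add: theorem_of_ImpI)
qed (simp_all add: theorem_of_ImpI derives_insert_hyp)

section \<open>The canonical model\<close>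

definition canon_ext :: "'a fm \<Rightarrow> 'a bset set \<times> 'a bset set" where
  "canon_ext a = ({w \<in> Wc. a \<in> fst w}, {w \<in> Wc. Neg a \<in> fst w})"

lemma theorem_of_Imp_if_Wc_subset:
  assumes "{w \<in> Wc. a \<in> fst w} \<subseteq> {w \<in> Wc. b \<in> fst w}"
  shows "theorem_of (Imp a b)"
proof (rule ccontr)
  assume "\<not> theorem_of (Imp a b)"
  then have "\<not> derives {a} b"
    using theorem_of_ImpI by blast
  then obtain w where "w \<in> Wc" "a \<in> fst w" "b \<notin> fst w"
    using lindenbaum_singleton by blast
  with assms show False
    by blast
qed

lemma theorem_of_SIff_if_canon_ext_eq: "canon_ext a = canon_ext b \<Longrightarrow> theorem_of (SIff a b)"
  unfolding canon_ext_def by (intro theorem_of_SIffI theorem_of_Imp_if_Wc_subset) simp_all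

lemma Rc_canon_ext_iff:
  assumes "v \<in> Wc" and "u \<in> Wc"
  shows "Rc v (canon_ext a) u \<longleftrightarrow>
    {\<psi>. Box a \<psi> \<in> fst v} \<subseteq> fst u \<and> {Neg (Box a \<psi>) | \<psi>. Neg \<psi> \<in> fst u} \<subseteq> fst v"
proof
  assume "Rc v (canon_ext a) u"
  then obtain b where "canon_ext a = canon_ext b"
    and succ: "{\<psi>. Box b \<psi> \<in> fst v} \<subseteq> fst u" "{Neg (Box b \<psi>) | \<psi>. Neg \<psi> \<in> fst u} \<subseteq> fst v"
    unfolding Rc_def canon_ext_def by auto
  then have "theorem_of (SIff (Box a \<psi>) (Box b \<psi>))" for \<psi>
    by (intro thm_RA theorem_of_SIff_if_canon_ext_eq)
  then have "Box a \<psi> \<in> fst v \<longleftrightarrow> Box b \<psi> \<in> fst v"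
    and "Neg (Box a \<psi>) \<in> fst v \<longleftrightarrow> Neg (Box b \<psi>) \<in> fst v" for \<psi>
    using derives_SIff Wc_derives_iff[OF assms(1)] by metis+
  with succ show "{\<psi>. Box a \<psi> \<in> fst v} \<subseteq> fst u \<and> {Neg (Box a \<psi>) | \<psi>. Neg \<psi> \<in> fst u} \<subseteq> fst v"
    by blast
next
  assume "{\<psi>. Box a \<psi> \<in> fst v} \<subseteq> fst u \<and> {Neg (Box a \<psi>) | \<psi>. Neg \<psi> \<in> fst u} \<subseteq> fst v"
  with assms show "Rc v (canon_ext a) u"
    unfolding Rc_def canon_ext_def by auto
qed

lemma map_if_set_subset_image:
  assumes "set xs \<subseteq> f ` A"
  obtains ys where "xs = map f ys" and "set ys \<subseteq> A"
proof -
  have "xs \<in> map f ` lists A"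
    using assms by (auto simp flip: lists_image)
  then show ?thesis
    using that by (auto simp: lists_eq_set)
qed

lemma not_bider_Dia_Box:
  assumes w: "w \<in> Wc" and u: "u \<in> Wc" and succ: "{\<psi>. Box a \<psi> \<in> fst w} \<subseteq> fst u"
  shows "\<not> bider (fst w \<union> Dia a ` fst u) (Box a ` (- fst u))"
proof
  assume "bider (fst w \<union> Dia a ` fst u) (Box a ` (- fst u))"
  then obtain ds where "ds \<noteq> []" "set ds \<subseteq> Box a ` (- fst u)" and
    ds_derived: "derives (fst w \<union> Dia a ` fst u) (disjs ds)"
    unfolding bider_def by blast
  then obtain \<chi>s where \<chi>s: "ds = map (Box a) \<chi>s" "\<chi>s \<noteq> []" "set \<chi>s \<subseteq> - fst u"
    by (auto elim: map_if_set_subset_image)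
  with ds_derived have "derives (fst w \<union> Dia a ` fst u) (disjs (map (Box a) \<chi>s))"
    by simp
  then have "derives (fst w \<union> Dia a ` fst u) (Box a (disjs \<chi>s))"
    by (rule derives_theorem_mp[OF theorem_disjs_Box[OF \<chi>s(2)]])
  then obtain qs where "set qs \<subseteq> Dia a ` fst u" and "derives (fst w) (imps qs (Box a (disjs \<chi>s)))"
    using derives_compact by blast
  then obtain rs where "set rs \<subseteq> fst u"
    and "derives (fst w) (imps (map (Dia a) rs) (Box a (disjs \<chi>s)))"
    using map_if_set_subset_image by metis
  then have "Box a (imps rs (disjs \<chi>s)) \<in> fst w"
    using derives_Box_imps_if_Dia Wc_derives_iff[OF w] by blast
  then have "derives (fst u \<union> set rs) (disjs \<chi>s)"
    using succ der_hyp derives_imps_iff by blast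
  then have "disjs \<chi>s \<in> fst u"
    using \<open>set rs \<subseteq> fst u\<close> Wc_derives_iff[OF u] by (simp add: Un_absorb2)
  then show False
    using Wc_disjs[OF u \<open>\<chi>s \<noteq> []\<close>] \<chi>s(3) by blast
qed

lemma exists_Rc_extension:
  assumes w: "w \<in> Wc" and u: "u \<in> Wc" and succ: "{\<psi>. Box a \<psi> \<in> fst w} \<subseteq> fst u"
  shows "\<exists>v\<in>Wc. lec w v \<and> Rc v (canon_ext a) u"
proof -
  obtain v where v: "v \<in> Wc" "fst w \<union> Dia a ` fst u \<subseteq> fst v" "Box a ` (- fst u) \<inter> fst v = {}"
    using lindenbaum[OF not_bider_Dia_Box[OF assms]] by blast
  have "{\<psi>. Box a \<psi> \<in> fst v} \<subseteq> fst u"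
    using v(3) by blast
  moreover have "Neg (Box a \<psi>) \<in> fst v" if "Neg \<psi> \<in> fst u" for \<psi>
    using that v(2) derives_Neg_Box_if_Dia_Neg der_hyp Wc_derives_iff[OF v(1)] by blast
  ultimately have "Rc v (canon_ext a) u"
    using Rc_canon_ext_iff[OF v(1) u] by blast
  moreover have "lec w v"
    using v(2) by (simp add: lec_def)
  ultimately show ?thesis
    using v(1) by blast
qed

lemma not_bider_Neg_Box_witness:
  assumes w: "w \<in> Wc" and Neg_Box: "Neg (Box a b) \<in> fst w"
  shows "\<not> bider (insert (Neg b) {\<psi>. Box a \<psi> \<in> fst w}) (Neg ` {\<psi>. Neg (Box a \<psi>) \<notin> fst w})"
proof
  assume "bider (insert (Neg b) {\<psi>. Box a \<psi> \<in> fst w}) (Neg ` {\<psi>. Neg (Box a \<psi>) \<notin> fst w})"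
  then obtain ds where "ds \<noteq> []" "set ds \<subseteq> Neg ` {\<psi>. Neg (Box a \<psi>) \<notin> fst w}" and
    ds_derived: "derives (insert (Neg b) {\<psi>. Box a \<psi> \<in> fst w}) (disjs ds)"
    unfolding bider_def by blast
  then obtain \<psi>s where \<psi>s: "ds = map Neg \<psi>s" "\<psi>s \<noteq> []" "set \<psi>s \<subseteq> {\<psi>. Neg (Box a \<psi>) \<notin> fst w}"
    by (auto elim: map_if_set_subset_image)
  let ?D = "disjs ds"
  have "derives {\<psi>. Box a \<psi> \<in> fst w} (Imp (Neg b) ?D)"
    using ds_derived by (simp add: derives_Imp_iff)
  then have "derives (fst w) (Box a (Imp (Neg b) ?D))"
    by (rule derives_Box_closure) (simp add: der_hyp)
  then have "derives (fst w) (Neg (Box a (Disj b (Neg (Imp (Neg b) ?D)))))"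
    using der_mp[OF derives_ConjI[OF der_hyp[OF Neg_Box]] derives_axiom[OF ax_A2]] by blast
  moreover have "theorem_of (Imp (Neg (Disj b (Neg (Imp (Neg b) ?D)))) (Neg (conjs \<psi>s)))"
    using theorem_of_Imp_trans[OF theorem_Neg_Disj_Neg_Imp theorem_disjs_Neg_conjs[OF \<psi>s(2)]] \<psi>s(1)
    by simp
  ultimately have "derives (fst w) (Neg (Box a (conjs \<psi>s)))"
    using derives_theorem_mp theorem_Neg_Box_mono by blast
  then have "disjs (map (\<lambda>\<psi>. Neg (Box a \<psi>)) \<psi>s) \<in> fst w"
    using derives_theorem_mp[OF theorem_Neg_Box_conjs[OF \<psi>s(2)]] Wc_derives_iff[OF w] by blast
  then have "\<exists>d\<in>set (map (\<lambda>\<psi>. Neg (Box a \<psi>)) \<psi>s). d \<in> fst w"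
    by (rule Wc_disjs[OF w, rotated]) (simp add: \<psi>s(2))
  with \<psi>s(3) show False
    by auto
qed

lemma exists_Rc_Neg_witness:
  assumes w: "w \<in> Wc" and "Neg (Box a b) \<in> fst w"
  shows "\<exists>u\<in>Wc. Rc w (canon_ext a) u \<and> Neg b \<in> fst u"
proof -
  obtain u where u: "u \<in> Wc" "insert (Neg b) {\<psi>. Box a \<psi> \<in> fst w} \<subseteq> fst u"
    "Neg ` {\<psi>. Neg (Box a \<psi>) \<notin> fst w} \<inter> fst u = {}"
    using lindenbaum[OF not_bider_Neg_Box_witness[OF assms]] by blast
  have "Neg (Box a \<psi>) \<in> fst w" if "Neg \<psi> \<in> fst u" for \<psi>
    using that u(3) by blast
  with u(2) have "Rc w (canon_ext a) u"
    using Rc_canon_ext_iff[OF w u(1)] by blast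
  with u show ?thesis
    by blast
qed

lemma Wc_Box_iff:
  assumes w: "w \<in> Wc"
  shows "Box a b \<in> fst w \<longleftrightarrow> (\<forall>v\<in>Wc. lec w v \<longrightarrow> (\<forall>u\<in>Wc. Rc v (canon_ext a) u \<longrightarrow> b \<in> fst u))"
proof
  assume "Box a b \<in> fst w"
  then show "\<forall>v\<in>Wc. lec w v \<longrightarrow> (\<forall>u\<in>Wc. Rc v (canon_ext a) u \<longrightarrow> b \<in> fst u)"
    using Rc_canon_ext_iff unfolding lec_def by blast
next
  assume "\<forall>v\<in>Wc. lec w v \<longrightarrow> (\<forall>u\<in>Wc. Rc v (canon_ext a) u \<longrightarrow> b \<in> fst u)"
  moreover have "\<exists>v\<in>Wc. lec w v \<and> (\<exists>u\<in>Wc. Rc v (canon_ext a) u \<and> b \<notin> fst u)"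
    if "Box a b \<notin> fst w"
  proof -
    have "\<not> derives {\<psi>. Box a \<psi> \<in> fst w} b"
      using that derives_Box_closure der_hyp Wc_derives_iff[OF w] by blast
    then obtain u where "u \<in> Wc" "{\<psi>. Box a \<psi> \<in> fst w} \<subseteq> fst u" "b \<notin> fst u"
      using lindenbaum_singleton by blast
    then show ?thesis
      using exists_Rc_extension[OF w] by blast
  qed
  ultimately show "Box a b \<in> fst w"
    by blast
qed

lemma Wc_Neg_Box_iff:
  assumes w: "w \<in> Wc"
  shows "Neg (Box a b) \<in> fst w \<longleftrightarrow> (\<exists>u\<in>Wc. Rc w (canon_ext a) u \<and> Neg b \<in> fst u)"
  using exists_Rc_Neg_witness[OF w] Rc_canon_ext_iff[OF w] by blast

lemma Mc_simps [simp]: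
  "W Mc = Wc" "le Mc = lec" "R Mc = Rc"
  "Vp Mc = (\<lambda>p. {w \<in> Wc. Atom p \<in> fst w})" "Vn Mc = (\<lambda>p. {w \<in> Wc. Neg (Atom p) \<in> fst w})"
  by (simp_all add: Mc_def)

theorem lemma11:
  fixes \<phi> :: "'a fm" and \<Gamma> \<Delta> :: "'a fm set"
  assumes "(\<Gamma>, \<Delta>) \<in> Wc"
  shows "(sat Mc \<phi> True (\<Gamma>, \<Delta>) \<longleftrightarrow> \<phi> \<in> \<Gamma>) \<and> (sat Mc \<phi> False (\<Gamma>, \<Delta>) \<longleftrightarrow> Neg \<phi> \<in> \<Gamma>)"
  using assms
proof (induction \<phi> arbitrary: \<Gamma> \<Delta>)
  case (Conj a b)
  then show ?case
    using Wc_Conj_iff[OF Conj.prems] Wc_Neg_Conj_iff[OF Conj.prems] by simp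
next
  case (Disj a b)
  then show ?case
    using Wc_Disj_iff[OF Disj.prems] Wc_Neg_Disj_iff[OF Disj.prems] by simp
next
  case (Imp a b)
  then show ?case
    using Wc_Imp_iff[OF Imp.prems] Wc_Neg_Imp_iff[OF Imp.prems] by (auto simp: lec_def)
next
  case (Neg a)
  then show ?case
    using Wc_Neg_Neg_iff[OF Neg.prems] by simp
next
  case (Box a b)
  have ext: "({x \<in> Wc. sat Mc a True x}, {x \<in> Wc. sat Mc a False x}) = canon_ext a"
    using Box.IH(1) by (auto simp: canon_ext_def)
  have "(sat Mc b True u \<longleftrightarrow> b \<in> fst u) \<and> (sat Mc b False u \<longleftrightarrow> Neg b \<in> fst u)" if "u \<in> Wc" for u
    using Box.IH(2)[of "fst u" "snd u"] that by simp
  then show ?case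
    using Wc_Box_iff[OF Box.prems] Wc_Neg_Box_iff[OF Box.prems] by (auto simp: ext)
qed simp

end
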